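(* Let $n=p'q$ where $p',q$ are distinct primes both at least $7$, and let $A=L(n;p')$. Let $S=(x_1,x_2,x_3)$ be an $A$-extremal sequence for the Davenport constant in $\mathbb{Z}_n$. Then $S$ is equivalent with respect to $A$ to a sequence $(y_1,y_2,y_3)$ for which one of the following holds: (i) $y_1$ is the only term divisible by $q$, $y_1\neq 0$, and the image of $(y_2,y_3)$ under the natural map $\mathbb{Z}_n\to\mathbb{Z}_q$ is a $Q_q$-extremal sequence for the Davenport constant; (ii) $y_1$ is the only term coprime to $p'$, and the image of $(y_2,y_3)$ under the natural map $\mathbb{Z}_n\to\mathbb{Z}_q$ is a $Q_q$-extremal sequence for the Davenport constant.
   Context: $\mathbb{Z}_m$ is the integers mod $m$, $U(m)$ its unit group; for a prime $q$, $Q_q=\{x^2: x\in U(q)\}$. For nonempty $A\subseteq\mathbb{Z}_m\setminus\{0\}$, a sequence $(x_1,\ldots,x_k)$ is an $A$-weighted zero-sum sequence if $\sum a_ix_i=0$ for some $a_i\in A$; $D_A(m)$ is the least $k$ such that every length-$k$ sequence in $\mathbb{Z}_m$ has a nonempty $A$-weighted zero-sum subsequence; an $A$-extremal sequence for the Davenport constant is a sequence of length $D_A(m)-1$ with no $A$-weighted zero-sum subsequence. For a multiplicative group $A$, $(x_1,\ldots,x_k)$ and $(y_1,\ldots,y_k)$ are equivalent with respect to $A$ if there are $a_i\in A$, a unit $c$ and a permutation $\sigma$ with $y_{\sigma(i)}=c\,a_ix_i$ for all $i$. For odd $m=\prod p_i^{r_i}$, prime $p\mid m$ and $a\in U(m)$,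 $\left(\frac{a}{p}\right)$ is the Legendre symbol of the image mod $p$, $\left(\frac{a}{m}\right)=\prod\left(\frac{a}{p_i}\right)^{r_i}$, and $L(m;p')=\{a\in U(m):\left(\frac{a}{m}\right)=\left(\frac{a}{p'}\right)\}$ for a prime $p'\mid m$. *)

theory Defs
  imports "HOL-Number_Theory.Number_Theory"
begin

(* Z_m is represented by the integers {0..<m}; a sequence in Z_m is a list of such integers. *)

definition Zmod :: "int \<Rightarrow> int set" where
  "Zmod m = {0..<m}"

definition units_mod :: "int \<Rightarrow> int set" where
  "units_mod m = {a \<in> {0..<m}. coprime a m}"

definition Qsq :: "int \<Rightarrow> int set" where
  "Qsq q = {(x^2) mod q | x. x \<in> units_mod q}"

definition has_wzs_subseq :: "int \<Rightarrow> int set \<Rightarrow> int list \<Rightarrow> bool" where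
  "has_wzs_subseq m A xs \<longleftrightarrow>
     (\<exists>I a. I \<subseteq> {..<length xs} \<and> I \<noteq> {} \<and> (\<forall>i\<in>I. a i \<in> A) \<and>
            (\<Sum>i\<in>I. a i * xs ! i) mod m = 0)"

definition davenport :: "int \<Rightarrow> int set \<Rightarrow> nat" where
  "davenport m A = (LEAST k. \<forall>xs. length xs = k \<and> set xs \<subseteq> Zmod m \<longrightarrow> has_wzs_subseq m A xs)"

definition extremal :: "int \<Rightarrow> int set \<Rightarrow> int list \<Rightarrow> bool" where
  "extremal m A xs \<longleftrightarrow> set xs \<subseteq> Zmod m \<and> length xs = davenport m A - 1 \<and>
     \<not> has_wzs_subseq m A xs"

definition equiv_wrt :: "int \<Rightarrow> int set \<Rightarrow> int list \<Rightarrow> int list \<Rightarrow> bool" where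
  "equiv_wrt m A xs ys \<longleftrightarrow> length xs = length ys \<and>
     (\<exists>a c \<sigma>. (\<forall>i<length xs. a i \<in> A) \<and> c \<in> units_mod m \<and>
        bij_betw \<sigma> {..<length xs} {..<length xs} \<and>
        (\<forall>i<length xs. ys ! (\<sigma> i) = (c * a i * xs ! i) mod m))"

definition jsym :: "int \<Rightarrow> int \<Rightarrow> int" where
  "jsym a m = (\<Prod>p\<in>prime_factors m. Legendre a p ^ multiplicity p m)"

definition Lset :: "int \<Rightarrow> int \<Rightarrow> int set" where
  "Lset m p' = {a \<in> units_mod m. jsym a m = Legendre a p'}"

end

theory Submission
  imports Defs "HOL-Combinatorics.List_Permutation"
begin

text \<open>By the Chinese remainder theorem a weight in \<open>A = L(p'q; p')\<close> is a pair (unit modulo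
  \<open>p'\<close>, nonzero square modulo \<open>q\<close>), so a set \<open>J\<close> of terms carries an \<open>A\<close>-weighted zero-sum
  iff it carries a \<open>Q\<^sub>q\<close>-weighted zero-sum modulo \<open>q\<close> and a unit-weighted one modulo \<open>p'\<close>; as
  \<open>p'\<close> is odd, the latter fails only when exactly one term of \<open>J\<close> is a unit modulo \<open>p'\<close>.
  Extremality of a triple gives \<open>D\<^sub>A(n) = 4\<close>, whence every triple modulo \<open>q\<close> has a
  \<open>Q\<^sub>q\<close>-weighted zero-sum (lift it and append a term that is \<open>1\<close> modulo \<open>p'\<close>, \<open>0\<close> modulo \<open>q\<close>).
  So in an extremal triple every \<open>Q\<^sub>q\<close>-weighted zero-sum modulo \<open>q\<close> contains exactly one
  \<open>p'\<close>-unit. If a term is divisible by \<open>q\<close>, it is the only one, it is a \<open>p'\<close>-unit, and the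
  other two terms admit no \<open>Q\<^sub>q\<close>-weighted zero-sum: this is case (i). Otherwise the whole triple
  has a \<open>Q\<^sub>q\<close>-weighted zero-sum with a single \<open>p'\<close>-unit \<open>y\<^sub>1\<close>; a second \<open>p'\<close>-unit could be
  added to that zero-sum, because for \<open>q \<ge> 7\<close> every nonzero residue times a square is a
  difference of two nonzero squares. Hence \<open>y\<^sub>2, y\<^sub>3\<close> are divisible by \<open>p'\<close>: case (ii).\<close>

section \<open>Weighted zero-sums and the Davenport constant\<close>

lemma has_wzs_subseqI:
  assumes "I \<subseteq> {..<length xs}" "I \<noteq> {}" "\<And>i. i \<in> I \<Longrightarrow> a i \<in> A"
    and "m dvd (\<Sum>i\<in>I. a i * xs ! i)"
  shows "has_wzs_subseq m A xs"
  unfolding has_wzs_subseq_def using assms by (intro exI[of _ I] exI[of _ a]) simp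

lemma has_wzs_subseqE:
  assumes "has_wzs_subseq m A xs"
  obtains I a where "I \<subseteq> {..<length xs}" "I \<noteq> {}" "\<forall>i\<in>I. a i \<in> A"
    and "m dvd (\<Sum>i\<in>I. a i * xs ! i)"
  using assms unfolding has_wzs_subseq_def dvd_eq_mod_eq_0 by (elim exE conjE) (rule that; auto)

lemma has_wzs_subseq_take:
  assumes "has_wzs_subseq m A (take k xs)"
  shows "has_wzs_subseq m A xs"
proof -
  obtain I a where I: "I \<subseteq> {..<length (take k xs)}" "I \<noteq> {}" "\<forall>i\<in>I. a i \<in> A"
    and zero: "m dvd (\<Sum>i\<in>I. a i * take k xs ! i)"
    by (rule has_wzs_subseqE[OF assms])
  have "(\<Sum>i\<in>I. a i * take k xs ! i) = (\<Sum>i\<in>I. a i * xs ! i)"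
    using I(1) by (intro sum.cong) auto
  moreover have "I \<subseteq> {..<length xs}"
    using I(1) by auto
  ultimately show ?thesis
    using I(2,3) zero by (intro has_wzs_subseqI[of I]) auto
qed

text \<open>Pigeonhole on the prefix sums: two of them agree modulo \<open>m\<close>, and the block between
  them is a zero-sum with all weights \<open>1\<close>.\<close>
lemma has_wzs_subseq_of_length_modulus:
  fixes m :: int
  assumes "0 < m" "1 \<in> A" "length xs = nat m"
  shows "has_wzs_subseq m A xs"
proof -
  define s where "s i = (\<Sum>l<i. xs ! l) mod m" for i
  have "s ` {..nat m} \<subseteq> {0..<m}"
    unfolding s_def using assms(1) by auto
  then have "\<not> inj_on s {..nat m}"
    using card_inj_on_le[of s "{..nat m}" "{0..<m}"] assms(1) by auto
  then obtain i j where ij: "i < j" "j \<le> nat m" "s i = s j"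
    unfolding inj_on_def by (metis atMost_iff linorder_neqE_nat)
  have "(\<Sum>l<i. xs ! l) + (\<Sum>l\<in>{i..<j}. xs ! l) = (\<Sum>l<j. xs ! l)"
    using ij(1) by (simp add: lessThan_atLeast0 sum.atLeastLessThan_concat)
  then have "(\<Sum>l\<in>{i..<j}. xs ! l) = (\<Sum>l<j. xs ! l) - (\<Sum>l<i. xs ! l)"
    by linarith
  moreover have "m dvd (\<Sum>l<j. xs ! l) - (\<Sum>l<i. xs ! l)"
    using ij(3) unfolding s_def by (metis mod_eq_dvd_iff)
  ultimately have "m dvd (\<Sum>l\<in>{i..<j}. 1 * xs ! l)"
    by simp
  moreover have "{i..<j} \<subseteq> {..<length xs}" "{i..<j} \<noteq> {}"
    using ij(1,2) assms(3) by auto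
  ultimately show ?thesis
    using assms(2) by (intro has_wzs_subseqI) auto
qed

lemma has_wzs_subseq_of_length_davenport:
  fixes m :: int
  assumes "0 < m" "1 \<in> A" "length xs = davenport m A" "set xs \<subseteq> Zmod m"
  shows "has_wzs_subseq m A xs"
proof -
  have "\<exists>k. \<forall>xs. length xs = k \<and> set xs \<subseteq> Zmod m \<longrightarrow> has_wzs_subseq m A xs"
    using has_wzs_subseq_of_length_modulus[OF assms(1,2)] by blast
  from LeastI_ex[OF this] show ?thesis
    using assms(3,4) unfolding davenport_def by blast
qed

lemma davenport_eqI:
  assumes "\<forall>xs. length xs = Suc k \<and> set xs \<subseteq> Zmod m \<longrightarrow> has_wzs_subseq m A xs"
    and "length ys = k" "set ys \<subseteq> Zmod m" "\<not> has_wzs_subseq m A ys"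
  shows "davenport m A = Suc k"
  unfolding davenport_def
proof (rule Least_equality)
  fix l assume l: "\<forall>xs. length xs = l \<and> set xs \<subseteq> Zmod m \<longrightarrow> has_wzs_subseq m A xs"
  show "Suc k \<le> l"
  proof (rule ccontr)
    assume "\<not> Suc k \<le> l"
    then have "has_wzs_subseq m A (take l ys)"
      using l assms(2,3) set_take_subset[of l ys] by auto
    then show False
      using assms(4) has_wzs_subseq_take by blast
  qed
qed (use assms(1) in blast)

lemma mset_map_nth_perm:
  assumes "distinct is" "set is = {..<length xs}"
  shows "mset (map ((!) xs) is) = mset xs"
proof -
  have "mset is = mset [0..<length xs]"
    using assms by (metis distinct_upt set_eq_iff_mset_eq_distinct set_upt atLeast0LessThan)
  then have "mset (map ((!) xs) is) = mset (map ((!) xs) [0..<length xs])"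
    by (metis mset_map)
  then show ?thesis
    by (simp add: map_nth)
qed

lemma other_two_indices:
  fixes k :: nat
  assumes "k < 3"
  obtains i j where "distinct [k, i, j]" "set [k, i, j] = {..<3}"
proof -
  consider "k = 0" | "k = 1" | "k = 2"
    using assms by linarith
  then show thesis
  proof cases
    case 1
    then show thesis using that[of 1 2] by (auto simp: lessThan_nat_numeral)
  next
    case 2
    then show thesis using that[of 0 2] by (auto simp: lessThan_nat_numeral)
  next
    case 3
    then show thesis using that[of 0 1] by (auto simp: lessThan_nat_numeral)
  qed
qed

lemma equiv_wrt_if_mset_eq:
  fixes m :: int
  assumes "1 \<in> A" "1 < m" "set xs \<subseteq> Zmod m" "mset xs = mset ys"
  shows "equiv_wrt m A xs ys"
proof -
  obtain \<sigma> where \<sigma>: "bij_betw \<sigma> {..<length xs} {..<length ys}"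
    and nth: "\<forall>i<length xs. xs ! i = ys ! \<sigma> i"
    using permutation_Ex_bij[OF assms(4)] by blast
  have len: "length xs = length ys"
    using assms(4) by (rule mset_eq_length)
  have "xs ! i = (1 * 1 * xs ! i) mod m" if "i < length xs" for i
  proof -
    have "xs ! i \<in> {0..<m}"
      using assms(3) nth_mem[OF that] unfolding Zmod_def by blast
    then show ?thesis by simp
  qed
  moreover have "(1::int) \<in> units_mod m"
    using assms(2) unfolding units_mod_def by simp
  ultimately show ?thesis
    unfolding equiv_wrt_def using len \<sigma> nth assms(1)
    by (intro conjI exI[of _ "\<lambda>_. 1"] exI[of _ 1] exI[of _ \<sigma>]) auto
qed

section \<open>Nonzero squares and the weight set \<open>L(pq; p)\<close>\<close>

lemma coprime_prime_right_iff:
  fixes p :: int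
  assumes "prime p"
  shows "coprime a p \<longleftrightarrow> \<not> p dvd a"
  by (meson assms coprime_commute prime_imp_coprime coprime_common_divisor dvd_refl not_prime_unit)

definition unit_square_mod :: "int \<Rightarrow> int \<Rightarrow> bool" where
  "unit_square_mod q b \<longleftrightarrow> (\<exists>s. \<not> q dvd s \<and> [b = s^2] (mod q))"

lemma unit_square_mod_1: "prime q \<Longrightarrow> unit_square_mod q 1"
  unfolding unit_square_mod_def using prime_gt_1_int[of q] by (intro exI[of _ 1]) auto

lemma unit_square_mod_power2: "\<not> q dvd s \<Longrightarrow> unit_square_mod q (s^2)"
  unfolding unit_square_mod_def by auto

lemma unit_square_mod_cong: "unit_square_mod q a \<Longrightarrow> [a = b] (mod q) \<Longrightarrow> unit_square_mod q b"
  unfolding unit_square_mod_def by (meson cong_sym cong_trans)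

lemma unit_square_mod_not_dvd:
  assumes "prime q" "unit_square_mod q b"
  shows "\<not> q dvd b"
  using assms unfolding unit_square_mod_def by (meson cong_dvd_iff prime_dvd_power_int)

lemma unit_square_mod_mult:
  assumes "prime q" "unit_square_mod q a" "unit_square_mod q b"
  shows "unit_square_mod q (a * b)"
proof -
  obtain s t where "\<not> q dvd s" "[a = s^2] (mod q)" "\<not> q dvd t" "[b = t^2] (mod q)"
    using assms(2,3) unfolding unit_square_mod_def by blast
  then have "\<not> q dvd s * t" "[a * b = (s * t)^2] (mod q)"
    using assms(1) by (auto simp: prime_dvd_mult_iff power_mult_distrib intro: cong_mult)
  then show ?thesis
    unfolding unit_square_mod_def by blast
qed

lemma unit_square_mod_iff_QuadRes:
  assumes "prime q"
  shows "unit_square_mod q a \<longleftrightarrow> \<not> q dvd a \<and> QuadRes q a"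
proof
  assume "\<not> q dvd a \<and> QuadRes q a"
  then obtain s where "[s^2 = a] (mod q)" "\<not> q dvd a"
    unfolding QuadRes_def by blast
  moreover from this have "\<not> q dvd s"
    by (metis cong_dvd_iff dvd_mult2 power2_eq_square)
  ultimately show "unit_square_mod q a"
    unfolding unit_square_mod_def by (blast intro: cong_sym)
next
  assume "unit_square_mod q a"
  then show "\<not> q dvd a \<and> QuadRes q a"
    using assms unit_square_mod_not_dvd unfolding unit_square_mod_def QuadRes_def
    by (blast intro: cong_sym)
qed

lemma Qsq_iff:
  assumes "prime q"
  shows "b \<in> Qsq q \<longleftrightarrow> b \<in> {0..<q} \<and> unit_square_mod q b"
proof
  assume "b \<in> Qsq q"
  then obtain x where x: "b = x^2 mod q" "x \<in> units_mod q"
    unfolding Qsq_def by blast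
  then have "\<not> q dvd x"
    using assms unfolding units_mod_def by (auto simp: prime_imp_coprime coprime_commute)
  with x(1) show "b \<in> {0..<q} \<and> unit_square_mod q b"
    using assms prime_gt_0_int[of q] unfolding unit_square_mod_def by (auto simp: cong_def)
next
  assume b: "b \<in> {0..<q} \<and> unit_square_mod q b"
  then obtain s where s: "\<not> q dvd s" "[b = s^2] (mod q)"
    unfolding unit_square_mod_def by blast
  have "b = (s mod q)^2 mod q"
    using b s(2) by (simp add: cong_def power_mod)
  moreover have "s mod q \<in> units_mod q"
    using s(1) assms prime_gt_0_int[of q] unfolding units_mod_def
    by (simp add: prime_imp_coprime coprime_commute dvd_mod_iff)
  ultimately show "b \<in> Qsq q"
    unfolding Qsq_def by blast
qed

lemma has_wzs_subseq_Qsq_modE: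
  fixes q :: int
  assumes "prime q" "has_wzs_subseq q (Qsq q) (map (\<lambda>z. z mod q) zs)"
  obtains I \<beta> where "I \<subseteq> {..<length zs}" "I \<noteq> {}" "\<forall>i\<in>I. unit_square_mod q (\<beta> i)"
    and "q dvd (\<Sum>i\<in>I. \<beta> i * zs ! i)"
proof -
  obtain I \<beta> where I: "I \<subseteq> {..<length zs}" "I \<noteq> {}" "\<forall>i\<in>I. \<beta> i \<in> Qsq q"
    and zero: "q dvd (\<Sum>i\<in>I. \<beta> i * map (\<lambda>z. z mod q) zs ! i)"
    using has_wzs_subseqE[OF assms(2)] by auto
  have "[(\<Sum>i\<in>I. \<beta> i * map (\<lambda>z. z mod q) zs ! i) = (\<Sum>i\<in>I. \<beta> i * zs ! i)] (mod q)"
    using I(1) by (intro cong_sum) (auto simp: cong_def mod_mult_right_eq)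
  then have "q dvd (\<Sum>i\<in>I. \<beta> i * zs ! i)"
    using zero cong_dvd_iff by blast
  moreover have "\<forall>i\<in>I. unit_square_mod q (\<beta> i)"
    using I(3) Qsq_iff[OF assms(1)] by blast
  ultimately show thesis
    using that I(1,2) by blast
qed

lemma Qsq_zero_sum_pairE:
  fixes q u v :: int
  assumes "prime q" "\<not> q dvd u" "\<not> q dvd v" "has_wzs_subseq q (Qsq q) [u mod q, v mod q]"
  obtains b c where "unit_square_mod q b" "unit_square_mod q c" "q dvd b * u + c * v"
proof -
  have "has_wzs_subseq q (Qsq q) (map (\<lambda>z. z mod q) [u, v])"
    using assms(4) by simp
  then obtain I \<beta> where I: "I \<subseteq> {..<length [u, v]}" "I \<noteq> {}" "\<forall>i\<in>I. unit_square_mod q (\<beta> i)"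
    and zero: "q dvd (\<Sum>i\<in>I. \<beta> i * [u, v] ! i)"
    by (rule has_wzs_subseq_Qsq_modE[OF assms(1)])
  have not_dvd: "\<not> q dvd \<beta> i * [u, v] ! i" if "i \<in> I" for i
  proof -
    have "\<not> q dvd \<beta> i"
      using I(3) that unit_square_mod_not_dvd[OF assms(1)] by blast
    moreover have "i = 0 \<or> i = 1"
      using I(1) that by auto
    ultimately show ?thesis
      using assms(1-3) by (auto simp: prime_dvd_mult_iff)
  qed
  have "I \<noteq> {0}" "I \<noteq> {1}"
    using zero not_dvd by auto
  moreover have "I \<subseteq> {0, 1}"
    using I(1) by auto
  ultimately have "I = {0, 1}"
    using I(2) by blast
  then show thesis
    using that[of "\<beta> 0" "\<beta> 1"] I(3) zero by simp
qed

lemma jsym_prime_mult: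
  fixes p q :: int
  assumes "prime p" "prime q" "p \<noteq> q"
  shows "jsym a (p * q) = Legendre a p * Legendre a q"
proof -
  have "prime_factors (p * q) = {p, q}"
    using assms by (auto simp: prime_factors_product prime_prime_factors)
  moreover have "multiplicity p (p * q) = 1"
    by (metis assms mult.right_neutral multiplicity_times_same One_nat_def
        prime_multiplicity_other not_prime_unit not_prime_0)
  moreover have "multiplicity q (q * p) = 1"
    by (metis assms mult.right_neutral multiplicity_times_same One_nat_def
        prime_multiplicity_other not_prime_unit not_prime_0)
  ultimately show ?thesis
    using assms(3) unfolding jsym_def by (simp add: mult.commute)
qed

text \<open>Since \<open>(a/pq) = (a/p)(a/q)\<close>, membership in \<open>L(pq; p)\<close> asks \<open>a\<close> to be a unit modulo
  \<open>p\<close> and a nonzero square modulo \<open>q\<close>.\<close>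
lemma Lset_iff:
  fixes p q :: int
  assumes "prime p" "prime q" "p \<noteq> q"
  shows "a \<in> Lset (p * q) p \<longleftrightarrow> a \<in> {0..<p * q} \<and> \<not> p dvd a \<and> unit_square_mod q a"
proof -
  have "Legendre a p \<noteq> 0" if "\<not> p dvd a"
    using that unfolding Legendre_def by (simp add: cong_0_iff)
  moreover have "Legendre a q = 1 \<longleftrightarrow> unit_square_mod q a"
    unfolding Legendre_def unit_square_mod_iff_QuadRes[OF assms(2)] by (simp add: cong_0_iff)
  ultimately show ?thesis
    unfolding Lset_def units_mod_def jsym_prime_mult[OF assms]
    using assms unit_square_mod_not_dvd by (auto simp: coprime_prime_right_iff)
qed

lemma one_in_Lset:
  fixes p q :: int
  assumes "prime p" "prime q" "p \<noteq> q"
  shows "1 \<in> Lset (p * q) p"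
  using Lset_iff[OF assms] unit_square_mod_1[OF assms(2)] prime_gt_1_int[OF assms(1)]
    prime_gt_1_int[OF assms(2)] less_1_mult[of p q] by auto

lemma chinese_remainder_prime_mult:
  fixes p q :: int
  assumes "prime p" "prime q" "p \<noteq> q"
  obtains w where "w \<in> {0..<p * q}" "[w = r] (mod p)" "[w = s] (mod q)"
proof -
  obtain x where x: "[x = r] (mod p)" "[x = s] (mod q)"
    using binary_chinese_remainder_int assms by (metis primes_coprime)
  have "[x mod (p * q) = x] (mod p)" "[x mod (p * q) = x] (mod q)"
    by (simp_all add: cong_def mod_mod_cancel)
  moreover have "x mod (p * q) \<in> {0..<p * q}"
    using assms by (simp add: prime_gt_0_int)
  ultimately show thesis
    using that x by (meson cong_trans)
qed

lemma Lset_weight_exists: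
  fixes p q :: int
  assumes "prime p" "prime q" "p \<noteq> q" "\<not> p dvd \<alpha>" "unit_square_mod q \<beta>"
  obtains a where "a \<in> Lset (p * q) p" "[a = \<alpha>] (mod p)" "[a = \<beta>] (mod q)"
proof -
  obtain a where a: "a \<in> {0..<p * q}" "[a = \<alpha>] (mod p)" "[a = \<beta>] (mod q)"
    using chinese_remainder_prime_mult assms(1-3) by blast
  have "\<not> p dvd a"
    using a(2) assms(4) cong_dvd_iff by blast
  moreover have "unit_square_mod q a"
    using a(3) assms(5) unit_square_mod_cong cong_sym by blast
  ultimately show thesis
    using that a Lset_iff[OF assms(1-3)] by blast
qed

text \<open>By the Chinese remainder theorem the weights can be chosen independently modulo \<open>p\<close> and
  modulo \<open>q\<close>.\<close>
lemma has_wzs_subseq_LsetI: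
  fixes p q :: int
  assumes "prime p" "prime q" "p \<noteq> q"
    and J: "J \<subseteq> {..<length xs}" "J \<noteq> {}"
    and "\<forall>i\<in>J. \<not> p dvd \<alpha> i" "p dvd (\<Sum>i\<in>J. \<alpha> i * xs ! i)"
    and "\<forall>i\<in>J. unit_square_mod q (\<beta> i)" "q dvd (\<Sum>i\<in>J. \<beta> i * xs ! i)"
  shows "has_wzs_subseq (p * q) (Lset (p * q) p) xs"
proof -
  have "\<forall>i\<in>J. \<exists>a. a \<in> Lset (p * q) p \<and> [a = \<alpha> i] (mod p) \<and> [a = \<beta> i] (mod q)"
    using Lset_weight_exists[OF assms(1-3)] assms(6,8) by blast
  from bchoice[OF this] obtain a
    where a: "\<forall>i\<in>J. a i \<in> Lset (p * q) p \<and> [a i = \<alpha> i] (mod p) \<and> [a i = \<beta> i] (mod q)"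
    by blast
  have "[(\<Sum>i\<in>J. a i * xs ! i) = (\<Sum>i\<in>J. \<alpha> i * xs ! i)] (mod p)"
    "[(\<Sum>i\<in>J. a i * xs ! i) = (\<Sum>i\<in>J. \<beta> i * xs ! i)] (mod q)"
    using a by (auto intro!: cong_sum cong_mult)
  then have "p dvd (\<Sum>i\<in>J. a i * xs ! i)" "q dvd (\<Sum>i\<in>J. a i * xs ! i)"
    using assms(7,9) cong_dvd_iff by blast+
  then have "p * q dvd (\<Sum>i\<in>J. a i * xs ! i)"
    using assms(1-3) by (simp add: divides_mult primes_coprime)
  then show ?thesis
    using J a by (intro has_wzs_subseqI) auto
qed

text \<open>Lift a sequence modulo \<open>q\<close> to one that vanishes modulo \<open>p\<close>, and append a term that is \<open>1\<close>
  modulo \<open>p\<close> and \<open>0\<close> modulo \<open>q\<close>; a zero-sum of the longer sequence cannot use the new term.\<close>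
lemma has_wzs_subseq_Qsq_if_Lset:
  fixes p q :: int
  assumes "prime p" "prime q" "p \<noteq> q"
    and Lset_wzs: "\<forall>ws. length ws = Suc (length zs) \<and> set ws \<subseteq> Zmod (p * q)
      \<longrightarrow> has_wzs_subseq (p * q) (Lset (p * q) p) ws"
  shows "has_wzs_subseq q (Qsq q) zs"
proof -
  define k where "k = length zs"
  have "\<forall>z. \<exists>w. w \<in> {0..<p * q} \<and> [w = 0] (mod p) \<and> [w = z] (mod q)"
    using chinese_remainder_prime_mult[OF assms(1-3)] by blast
  from choice[OF this] obtain f
    where f: "\<forall>z. f z \<in> {0..<p * q} \<and> [f z = 0] (mod p) \<and> [f z = z] (mod q)"
    by blast
  obtain e where e: "e \<in> {0..<p * q}" "[e = 1] (mod p)" "[e = 0] (mod q)"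
    using chinese_remainder_prime_mult[OF assms(1-3)] by blast
  define ws where "ws = map f zs @ [e]"
  have ws: "length ws = Suc k" "set ws \<subseteq> Zmod (p * q)"
    unfolding ws_def k_def Zmod_def using f e(1) by auto
  have ws_nth: "ws ! i = f (zs ! i)" if "i < k" for i
    using that unfolding ws_def k_def by (simp add: nth_append)
  have ws_k: "ws ! k = e"
    unfolding ws_def k_def by (simp add: nth_append)
  have "has_wzs_subseq (p * q) (Lset (p * q) p) ws"
    using Lset_wzs ws unfolding k_def by blast
  then obtain I a where I: "I \<subseteq> {..<length ws}" "I \<noteq> {}" "\<forall>i\<in>I. a i \<in> Lset (p * q) p"
    and zero: "p * q dvd (\<Sum>i\<in>I. a i * ws ! i)"
    by (rule has_wzs_subseqE)
  have a_p: "\<not> p dvd a i" and a_q: "unit_square_mod q (a i)" if "i \<in> I" for i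
    using I(3) that Lset_iff[OF assms(1-3)] by auto
  have "k \<notin> I"
  proof
    assume "k \<in> I"
    have "[a i * ws ! i = (if i = k then a i else 0)] (mod p)" if "i \<in> I" for i
    proof (cases "i = k")
      case True
      then show ?thesis
        using cong_scalar_left[OF e(2)] ws_k by simp
    next
      case False
      then have "i < k"
        using I(1) ws(1) that by auto
      then show ?thesis
        using cong_scalar_left[of "f (zs ! i)" 0 p "a i"] f ws_nth False by simp
    qed
    then have "[(\<Sum>i\<in>I. a i * ws ! i) = (\<Sum>i\<in>I. if i = k then a i else 0)] (mod p)"
      by (rule cong_sum)
    also have "(\<Sum>i\<in>I. if i = k then a i else 0) = a k"
      using \<open>k \<in> I\<close> finite_subset[OF I(1)] by (simp add: sum.delta)
    finally have "p dvd a k"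
      using zero cong_dvd_iff dvd_mult_left by blast
    with a_p \<open>k \<in> I\<close> show False by blast
  qed
  then have I_k: "I \<subseteq> {..<k}"
    using I(1) ws(1) by (auto simp: less_Suc_eq)
  have "[(\<Sum>i\<in>I. a i mod q * zs ! i) = (\<Sum>i\<in>I. a i * ws ! i)] (mod q)"
  proof (rule cong_sum)
    fix i assume "i \<in> I"
    then have "ws ! i = f (zs ! i)"
      using I_k ws_nth by blast
    then have "[zs ! i = ws ! i] (mod q)"
      using f cong_sym by metis
    moreover have "[a i mod q = a i] (mod q)"
      by (simp add: cong_def)
    ultimately show "[a i mod q * zs ! i = a i * ws ! i] (mod q)"
      using cong_mult by blast
  qed
  then have "q dvd (\<Sum>i\<in>I. a i mod q * zs ! i)"
    using zero cong_dvd_iff dvd_mult_right by blast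
  moreover have "a i mod q \<in> Qsq q" if "i \<in> I" for i
    using a_q[OF that] Qsq_iff[OF assms(2)] prime_gt_0_int[OF assms(2)] unit_square_mod_cong
    by (simp add: cong_def)
  ultimately show ?thesis
    using I_k I(2) unfolding k_def by (intro has_wzs_subseqI) auto
qed

section \<open>Balancing weights modulo a prime\<close>

text \<open>Weights \<open>1\<close> and \<open>-1\<close> cancel in pairs; an odd number of indices needs one triple
  \<open>1 + 1 - 2\<close>, so only a single index is hopeless.\<close>
lemma zero_sum_weights_exist:
  assumes "finite K" "card K \<noteq> 1"
  shows "\<exists>w. (\<forall>i\<in>K. w i \<in> {1, -1, -2 :: int}) \<and> (\<Sum>i\<in>K. w i) = 0"
  using assms
proof (induction "card K" arbitrary: K rule: less_induct)
  case less
  consider "card K = 0" | "card K = 3" | "2 \<le> card K" "card K \<noteq> 3"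
    using less.prems(2) by linarith
  then show ?case
  proof cases
    case 1
    then show ?thesis
      using less.prems(1) by simp
  next
    case 2
    then obtain i j l where K: "K = {i, j, l}" "i \<noteq> j" "j \<noteq> l" "i \<noteq> l"
      by (auto simp: card_3_iff)
    then show ?thesis
      by (intro exI[of _ "\<lambda>x. if x = i then -2 else 1"]) auto
  next
    case 3
    obtain i B where B: "K = insert i B" "i \<notin> B" "1 \<le> card B"
      using 3(1) card_le_Suc_iff[of 1 K] by auto
    obtain j K' where K': "B = insert j K'" "j \<notin> K'" "finite K'"
      using B(3) card_le_Suc_iff[of 0 B] by auto
    have K: "K = insert i (insert j K')" "i \<notin> insert j K'" "j \<notin> K'" "finite K'"
      using B K' by auto
    have "card K' = card K - 2"
      using K by simp
    then have "\<exists>w. (\<forall>x\<in>K'. w x \<in> {1, -1, -2 :: int}) \<and> (\<Sum>x\<in>K'. w x) = 0"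
      using 3 K(4) by (intro less.hyps) auto
    then obtain w where w: "\<forall>x\<in>K'. w x \<in> {1, -1, -2 :: int}" "(\<Sum>x\<in>K'. w x) = 0"
      by blast
    define w' where "w' = w(i := 1, j := -1)"
    have "(\<Sum>x\<in>K'. w' x) = (\<Sum>x\<in>K'. w x)"
      unfolding w'_def using K(2,3) by (intro sum.cong) auto
    then have "(\<Sum>x\<in>K. w' x) = 0"
      using K w(2) by (simp add: w'_def)
    moreover have "\<forall>x\<in>K. w' x \<in> {1, -1, -2 :: int}"
      using w(1) K(1) unfolding w'_def by auto
    ultimately show ?thesis
      by blast
  qed
qed

text \<open>With \<open>P\<close> the product of the terms not divisible by \<open>p\<close>, the weights \<open>w i * P / x i\<close> give
  the sum \<open>P * (\<Sum> w i) = 0\<close>.\<close>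
lemma unit_weights_zero_sum_mod_prime:
  fixes p :: int and x :: "'a \<Rightarrow> int"
  assumes "prime p" "p \<noteq> 2" "finite J" "card {i\<in>J. \<not> p dvd x i} \<noteq> 1"
  shows "\<exists>\<alpha>. (\<forall>i\<in>J. \<not> p dvd \<alpha> i) \<and> p dvd (\<Sum>i\<in>J. \<alpha> i * x i)"
proof -
  define K where "K = {i\<in>J. \<not> p dvd x i}"
  have K: "finite K" "K \<subseteq> J"
    unfolding K_def using assms(3) by auto
  obtain w where w: "\<forall>i\<in>K. w i \<in> {1, -1, -2 :: int}" "(\<Sum>i\<in>K. w i) = 0"
    using zero_sum_weights_exist[OF K(1)] assms(4) unfolding K_def by blast
  define \<alpha> where "\<alpha> i = (if i \<in> K then w i * (\<Prod>j\<in>K - {i}. x j) else 1)" for i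
  have "\<not> p dvd 2"
    using assms(1,2) prime_ge_2_int[of p] zdvd_imp_le[of p 2] by auto
  then have "\<not> p dvd w i" if "i \<in> K" for i
    using w(1) that assms(1) by (auto simp: not_prime_unit)
  moreover have "\<not> p dvd (\<Prod>j\<in>K - {i}. x j)" for i
    using K(1) assms(1) by (simp add: prime_dvd_prod_iff K_def)
  ultimately have "\<forall>i\<in>J. \<not> p dvd \<alpha> i"
    unfolding \<alpha>_def using assms(1) by (auto simp: prime_dvd_mult_iff not_prime_unit)
  moreover have "(\<Sum>i\<in>K. \<alpha> i * x i) = (\<Prod>j\<in>K. x j) * (\<Sum>i\<in>K. w i)"
    unfolding sum_distrib_left \<alpha>_def using K(1)
    by (intro sum.cong) (simp_all add: prod.remove[of K _ x] ac_simps)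
  moreover have "p dvd (\<Sum>i\<in>J - K. \<alpha> i * x i)"
    unfolding \<alpha>_def K_def by (intro dvd_sum) auto
  ultimately show ?thesis
    using w(2) sum.subset_diff[OF K(2) assms(3), of "\<lambda>i. \<alpha> i * x i"] by (intro exI[of _ \<alpha>]) simp
qed

text \<open>Some \<open>s \<in> {1, 2, 3}\<close> has \<open>x \<noteq> \<plusminus>s\<^sup>2\<close> modulo \<open>q\<close>, since otherwise \<open>q\<close> divides
  \<open>5 = 5 (x\<^sup>2 - 16) - 4 (x\<^sup>2 - 1) - (x\<^sup>2 - 81)\<close>; then
  \<open>(x + s\<^sup>2)\<^sup>2 - (x - s\<^sup>2)\<^sup>2 = (2 s)\<^sup>2 x\<close>.\<close>
lemma mult_unit_square_eq_diff_unit_squares: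
  fixes q x :: int
  assumes "prime q" "7 \<le> q" "\<not> q dvd x"
  obtains a b c where "\<not> q dvd a" "\<not> q dvd b" "\<not> q dvd c" "b^2 - a^2 = c^2 * x"
proof -
  have small: "\<not> q dvd d" if "0 < d" "d < 7" for d :: int
    using that assms(2) zdvd_imp_le[of q d] by auto
  have "\<exists>s\<in>{1, 2, 3}. \<not> q dvd (x - s^2) * (x + s^2)"
  proof (rule ccontr)
    assume "\<not> ?thesis"
    then have "q dvd 5 * ((x - 4) * (x + 4)) - 4 * ((x - 1) * (x + 1)) - (x - 9) * (x + 9)"
      by (simp add: power2_eq_square)
    then show False
      using small[of 5] by (simp add: algebra_simps)
  qed
  then obtain s :: int where s: "s \<in> {1, 2, 3}" "\<not> q dvd (x - s^2) * (x + s^2)"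
    by blast
  have "\<not> q dvd x - s^2" "\<not> q dvd x + s^2"
    using s(2) by auto
  moreover have "\<not> q dvd 2 * s"
    using small[of "2 * s"] s(1) by auto
  moreover have "(x + s^2)^2 - (x - s^2)^2 = (2 * s)^2 * x"
    by (simp add: algebra_simps power2_eq_square)
  ultimately show thesis
    by (rule that)
qed

text \<open>The weights come from \<open>B\<^sup>2 - A\<^sup>2 = C\<^sup>2 * (-a x z)\<close>:
  \<open>a B\<^sup>2 x + b A\<^sup>2 y + (C a x)\<^sup>2 z = A\<^sup>2 (a x + b y)\<close>.\<close>
lemma square_weighted_zero_sum_extend:
  fixes q a b x y z :: int
  assumes "prime q" "7 \<le> q" "unit_square_mod q a" "unit_square_mod q b"
    and "q dvd a * x + b * y" "\<not> q dvd x" "\<not> q dvd z"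
  obtains a' b' c' where "unit_square_mod q a'" "unit_square_mod q b'" "unit_square_mod q c'"
    and "q dvd a' * x + b' * y + c' * z"
proof -
  have "\<not> q dvd a"
    using assms(1,3) by (rule unit_square_mod_not_dvd)
  then have "\<not> q dvd - (a * x * z)"
    using assms(1,6,7) by (simp add: prime_dvd_mult_iff)
  then obtain A B C where ABC: "\<not> q dvd A" "\<not> q dvd B" "\<not> q dvd C"
    and eq: "B^2 - A^2 = C^2 * - (a * x * z)"
    using mult_unit_square_eq_diff_unit_squares assms(1,2) by blast
  have "a * B^2 * x + b * A^2 * y + (C * a * x)^2 * z
      = A^2 * (a * x + b * y) + a * x * (B^2 - A^2 + C^2 * (a * x * z))"
    by (simp add: algebra_simps power2_eq_square)
  also have "\<dots> = A^2 * (a * x + b * y)"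
    using eq by simp
  finally have "q dvd a * B^2 * x + b * A^2 * y + (C * a * x)^2 * z"
    using assms(5) by simp
  moreover have "\<not> q dvd C * a * x"
    using ABC(3) \<open>\<not> q dvd a\<close> assms(1,6) by (simp add: prime_dvd_mult_iff)
  ultimately show thesis
    using that[of "a * B^2" "b * A^2" "(C * a * x)^2"] assms(1,3,4) ABC(1,2)
    by (simp add: unit_square_mod_mult unit_square_mod_power2)
qed

section \<open>Zero-sum free triples\<close>

locale Lset_zero_sum_free =
  fixes p q :: int and xs :: "int list"
  assumes prime_p: "prime p" and prime_q: "prime q" and p_neq_q: "p \<noteq> q" and p_odd: "p \<noteq> 2"
    and zero_sum_free: "\<not> has_wzs_subseq (p * q) (Lset (p * q) p) xs"
begin

text \<open>Otherwise unit weights modulo \<open>p\<close> also give a zero-sum there, and the two combine.\<close>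
lemma square_zero_sum_unique_p_unit:
  assumes "J \<subseteq> {..<length xs}" "J \<noteq> {}"
    and "\<forall>i\<in>J. unit_square_mod q (\<beta> i)" "q dvd (\<Sum>i\<in>J. \<beta> i * xs ! i)"
  shows "card {i\<in>J. \<not> p dvd xs ! i} = 1"
proof (rule ccontr)
  assume "card {i\<in>J. \<not> p dvd xs ! i} \<noteq> 1"
  then obtain \<alpha> where "\<forall>i\<in>J. \<not> p dvd \<alpha> i" "p dvd (\<Sum>i\<in>J. \<alpha> i * xs ! i)"
    using unit_weights_zero_sum_mod_prime[OF prime_p p_odd, of J "(!) xs"]
      finite_subset[OF assms(1)] by auto
  then show False
    using has_wzs_subseq_LsetI[OF prime_p prime_q p_neq_q assms(1,2) _ _ assms(3,4)] zero_sum_free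
    by blast
qed

lemma not_p_dvd_and_q_dvd:
  assumes "i < length xs" "p dvd xs ! i" "q dvd xs ! i"
  shows False
proof -
  have "card {l\<in>{i}. \<not> p dvd xs ! l} = 1"
    by (rule square_zero_sum_unique_p_unit[of _ "\<lambda>_. 1"])
      (use assms unit_square_mod_1[OF prime_q] in auto)
  moreover have "{l\<in>{i}. \<not> p dvd xs ! l} = {}"
    using assms(2) by auto
  ultimately show False
    by (metis card.empty zero_neq_one)
qed

lemma q_dvd_unique:
  assumes "i < length xs" "j < length xs" "q dvd xs ! i" "q dvd xs ! j"
  shows "i = j"
proof (rule ccontr)
  assume "i \<noteq> j"
  have "card {l\<in>{i, j}. \<not> p dvd xs ! l} = 1"
    by (rule square_zero_sum_unique_p_unit[of _ "\<lambda>_. 1"])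
      (use assms \<open>i \<noteq> j\<close> unit_square_mod_1[OF prime_q] in auto)
  moreover have "{l\<in>{i, j}. \<not> p dvd xs ! l} = {i, j}"
    using assms not_p_dvd_and_q_dvd by blast
  ultimately show False
    using \<open>i \<noteq> j\<close> by simp
qed

lemma pair_free_if_p_dvd_iff:
  assumes "i < length xs" "j < length xs" "i \<noteq> j" "\<not> q dvd xs ! i" "\<not> q dvd xs ! j"
    and "p dvd xs ! i \<longleftrightarrow> p dvd xs ! j"
  shows "\<not> has_wzs_subseq q (Qsq q) [xs ! i mod q, xs ! j mod q]"
proof
  assume "has_wzs_subseq q (Qsq q) [xs ! i mod q, xs ! j mod q]"
  then obtain b c where "unit_square_mod q b" "unit_square_mod q c" "q dvd b * xs ! i + c * xs ! j"
    by (rule Qsq_zero_sum_pairE[OF prime_q assms(4,5)])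
  then have "card {l\<in>{i, j}. \<not> p dvd xs ! l} = 1"
    by (intro square_zero_sum_unique_p_unit[of _ "\<lambda>l. if l = i then b else c"])
      (use assms(1-3) in auto)
  moreover have "{l\<in>{i, j}. \<not> p dvd xs ! l} = (if p dvd xs ! i then {} else {i, j})"
    using assms(6) by auto
  ultimately show False
    using assms(3) by (simp split: if_splits)
qed

lemma pair_free_if_q_dvd_third:
  assumes "k < length xs" "i < length xs" "j < length xs" "distinct [k, i, j]" "q dvd xs ! k"
  shows "\<not> has_wzs_subseq q (Qsq q) [xs ! i mod q, xs ! j mod q]"
proof
  assume pair: "has_wzs_subseq q (Qsq q) [xs ! i mod q, xs ! j mod q]"
  have q_i: "\<not> q dvd xs ! i" and q_j: "\<not> q dvd xs ! j"
    using q_dvd_unique assms by auto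
  have p_k: "\<not> p dvd xs ! k"
    using not_p_dvd_and_q_dvd assms(1,5) by blast
  show False
  proof (cases "p dvd xs ! i \<longleftrightarrow> p dvd xs ! j")
    case True
    then show False
      using pair_free_if_p_dvd_iff assms q_i q_j pair by auto
  next
    case False
    obtain b c where bc: "unit_square_mod q b" "unit_square_mod q c" "q dvd b * xs ! i + c * xs ! j"
      using Qsq_zero_sum_pairE[OF prime_q q_i q_j pair] by blast
    have "q dvd (\<Sum>l\<in>{k, i, j}. (if l = i then b else if l = j then c else 1) * xs ! l)"
      using assms(4,5) bc(3) by (simp add: add.assoc)
    then have "card {l\<in>{k, i, j}. \<not> p dvd xs ! l} = 1"
      by (intro square_zero_sum_unique_p_unit)
        (use assms(1-3) bc(1,2) unit_square_mod_1[OF prime_q] in auto)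
    moreover have "{l\<in>{k, i, j}. \<not> p dvd xs ! l} = (if p dvd xs ! i then {k, j} else {k, i})"
      using False p_k by auto
    ultimately show False
      using assms(4) by (simp split: if_splits)
  qed
qed

text \<open>A second \<open>p\<close>-unit would lie outside the square-weighted zero-sum of the whole triple,
  and \<open>square_weighted_zero_sum_extend\<close> would add it, giving a zero-sum with two \<open>p\<close>-units.\<close>
lemma unique_p_unit_if_no_q_dvd:
  assumes "length xs = 3" "7 \<le> q" "\<forall>l<3. \<not> q dvd xs ! l"
    and "has_wzs_subseq q (Qsq q) (map (\<lambda>z. z mod q) xs)"
  obtains k where "k < 3" "\<not> p dvd xs ! k" "\<forall>l<3. l \<noteq> k \<longrightarrow> p dvd xs ! l"
proof -
  obtain I \<beta> where I: "I \<subseteq> {..<3}" "I \<noteq> {}" "\<forall>i\<in>I. unit_square_mod q (\<beta> i)"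
    and zero: "q dvd (\<Sum>i\<in>I. \<beta> i * xs ! i)"
    using has_wzs_subseq_Qsq_modE[OF prime_q assms(4)] assms(1) by metis
  have "card {i\<in>I. \<not> p dvd xs ! i} = 1"
    using square_zero_sum_unique_p_unit I zero assms(1) by simp
  then obtain k where k: "{i\<in>I. \<not> p dvd xs ! i} = {k}"
    by (rule card_1_singletonE)
  then have kI: "k \<in> I" "\<not> p dvd xs ! k" "k < 3"
    using I(1) by auto
  have "p dvd xs ! l" if l: "l < 3" "l \<noteq> k" for l
  proof (rule ccontr)
    assume p_l: "\<not> p dvd xs ! l"
    then have "l \<notin> I"
      using k l(2) by auto
    have "\<not> q dvd \<beta> k * xs ! k"
      using I(3) kI assms(3) unit_square_mod_not_dvd[OF prime_q]
      by (simp add: prime_dvd_mult_iff prime_q)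
    then have "I \<noteq> {k}"
      using zero by auto
    then obtain m where m: "m \<in> I" "m \<noteq> k"
      using kI(1) by blast
    then have m': "m < 3" "m \<noteq> l" "p dvd xs ! m"
      using I(1) k \<open>l \<notin> I\<close> by auto
    have "x = k \<or> x = m \<or> x = l" if "x < 3" for x
      using that kI(3) l m(2) m'(1,2) by auto
    then have "I = {k, m}"
      using I(1) kI(1) m(1) \<open>l \<notin> I\<close> by auto
    then have "q dvd \<beta> k * xs ! k + \<beta> m * xs ! m"
      using zero m(2) by simp
    then obtain a b c where abc: "unit_square_mod q a" "unit_square_mod q b" "unit_square_mod q c"
      and "q dvd a * xs ! k + b * xs ! m + c * xs ! l"
      using square_weighted_zero_sum_extend[OF prime_q assms(2)] I(3) kI(1) m(1) assms(3) kI(3) l(1)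
      by metis
    then have "q dvd (\<Sum>i\<in>{k, m, l}. (if i = k then a else if i = m then b else c) * xs ! i)"
      using m(2) m'(2) l(2) by (simp add: add.assoc)
    then have "card {i\<in>{k, m, l}. \<not> p dvd xs ! i} = 1"
      by (intro square_zero_sum_unique_p_unit) (use abc kI(3) m'(1) l(1) assms(1) in auto)
    moreover have "{i\<in>{k, m, l}. \<not> p dvd xs ! i} = {k, l}"
      using kI(2) p_l m'(3) by auto
    ultimately show False
      using l(2) by simp
  qed
  then show thesis
    using that kI(2,3) by blast
qed

lemma triple_structure:
  assumes "length xs = 3" "7 \<le> q" "\<forall>zs. length zs = 3 \<longrightarrow> has_wzs_subseq q (Qsq q) zs"
  obtains y1 y2 y3 where "mset [y1, y2, y3] = mset xs"
    and "\<not> has_wzs_subseq q (Qsq q) [y2 mod q, y3 mod q]"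
    and "(q dvd y1 \<and> \<not> q dvd y2 \<and> \<not> q dvd y3 \<and> \<not> p dvd y1) \<or> (\<not> p dvd y1 \<and> p dvd y2 \<and> p dvd y3)"
proof -
  have perm: "mset [xs ! k, xs ! i, xs ! j] = mset xs"
    if "distinct [k, i, j]" "set [k, i, j] = {..<3}" for k i j
    using mset_map_nth_perm[of "[k, i, j]" xs] that assms(1) by simp
  consider (q_dvd) k where "k < 3" "q dvd xs ! k" | (no_q_dvd) "\<forall>l<3. \<not> q dvd xs ! l"
    by blast
  then show thesis
  proof cases
    case q_dvd
    obtain i j where ij: "distinct [k, i, j]" "set [k, i, j] = {..<3}"
      using other_two_indices[OF q_dvd(1)] by blast
    then have "i < length xs" "j < length xs"
      using assms(1) by auto
    then show thesis
      using that[OF perm[OF ij]] pair_free_if_q_dvd_third[of k i j] q_dvd_unique[of k i]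
        q_dvd_unique[of k j] not_p_dvd_and_q_dvd[of k] q_dvd ij(1) assms(1) by auto
  next
    case no_q_dvd
    obtain k where k: "k < 3" "\<not> p dvd xs ! k" "\<forall>l<3. l \<noteq> k \<longrightarrow> p dvd xs ! l"
      using unique_p_unit_if_no_q_dvd assms no_q_dvd by auto
    obtain i j where ij: "distinct [k, i, j]" "set [k, i, j] = {..<3}"
      using other_two_indices[OF k(1)] by blast
    then have "i < 3" "j < 3" "p dvd xs ! i" "p dvd xs ! j"
      using k(3) by auto
    then show thesis
      using that[OF perm[OF ij]] pair_free_if_p_dvd_iff[of i j] no_q_dvd k(2) ij(1) assms(1) by auto
  qed
qed

end

theorem theorem5p5:
  fixes p' q n x1 x2 x3 :: int
  assumes "prime p'" and "prime q" and "p' \<noteq> q" and "p' \<ge> 7" and "q \<ge> 7"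
    and "n = p' * q"
    and "A = Lset n p'"
    and "extremal n A [x1, x2, x3]"
  shows "\<exists>y1 y2 y3. equiv_wrt n A [x1, x2, x3] [y1, y2, y3] \<and>
     ((q dvd y1 \<and> \<not> q dvd y2 \<and> \<not> q dvd y3 \<and> y1 \<noteq> 0 \<and>
        extremal q (Qsq q) [y2 mod q, y3 mod q])
    \<or> (coprime y1 p' \<and> \<not> coprime y2 p' \<and> \<not> coprime y3 p' \<and>
        extremal q (Qsq q) [y2 mod q, y3 mod q]))"
proof -
  note primes = assms(1-3)
  have xs: "set [x1, x2, x3] \<subseteq> Zmod n" "davenport n A = 4" "\<not> has_wzs_subseq n A [x1, x2, x3]"
    using assms(8) unfolding extremal_def by auto
  interpret Lset_zero_sum_free p' q "[x1, x2, x3]"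
    using primes assms(4,6,7) xs(3) by unfold_locales auto
  have "1 < n"
    using assms(6) prime_gt_1_int[OF assms(1)] prime_gt_1_int[OF assms(2)] less_1_mult by simp
  moreover have "1 \<in> A"
    using one_in_Lset[OF primes] assms(6,7) by simp
  ultimately have "\<forall>ws. length ws = 4 \<and> set ws \<subseteq> Zmod n \<longrightarrow> has_wzs_subseq n A ws"
    using has_wzs_subseq_of_length_davenport xs(2) by auto
  then have Qsq_3: "\<forall>zs. length zs = 3 \<longrightarrow> has_wzs_subseq q (Qsq q) zs"
    using has_wzs_subseq_Qsq_if_Lset[OF primes] assms(6,7) by auto
  obtain y1 y2 y3 where perm: "mset [y1, y2, y3] = mset [x1, x2, x3]"
    and pair: "\<not> has_wzs_subseq q (Qsq q) [y2 mod q, y3 mod q]"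
    and cases: "(q dvd y1 \<and> \<not> q dvd y2 \<and> \<not> q dvd y3 \<and> \<not> p' dvd y1)
      \<or> (\<not> p' dvd y1 \<and> p' dvd y2 \<and> p' dvd y3)"
    using triple_structure assms(5) Qsq_3 by auto
  have "extremal q (Qsq q) [y2 mod q, y3 mod q]"
    using davenport_eqI[of 2 q "Qsq q" "[y2 mod q, y3 mod q]"] Qsq_3 pair
      prime_gt_0_int[OF assms(2)] unfolding extremal_def Zmod_def by auto
  moreover have "equiv_wrt n A [x1, x2, x3] [y1, y2, y3]"
    using equiv_wrt_if_mset_eq \<open>1 \<in> A\<close> \<open>1 < n\<close> xs(1) perm by metis
  ultimately show ?thesis
    using cases coprime_prime_right_iff[OF assms(1)] by fastforce
qed

end
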